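(* Let $c>1/2$ and let $0<c_1<1<c_2$ be the two roots of $v\mapsto\phi(v)-c$, where $\phi(v)=\frac{v^2}{2}-\log v$. Then $$T_{c,2}\ge2\sqrt2\Big[\sqrt{\tfrac{c_1}{1+c_1}}+\sqrt{\tfrac{c_2}{1+c_2}}\Big].$$
   Context: Consider on $\{(u,v)\in\mathbb{R}^2:v>0\}$ the ODE $\dot u=v-\frac1v$, $\dot v=-u$. The function $H(u,v)=\frac12u^2+\phi(v)$, $\phi(v)=\frac{v^2}2-\log v$, is a first integral with minimum $1/2$ at $(0,1)$; for $c>1/2$ the level set $\{H=c,\ v>0\}$ is a closed curve carrying a periodic solution, and $T_{c,2}$ denotes its (minimal) period, equivalently $T_{c,2}=\sqrt2\int_{c_1}^{c_2}\frac{dv}{\sqrt{c-\phi(v)}}$. *)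

theory Defs
  imports "HOL-Analysis.Analysis"
begin

definition phi :: "real \<Rightarrow> real" where
  "phi v = v^2 / 2 - ln v"

text \<open>Period of the closed orbit on the level set H = c, via the paper's formula
  T_{c,2} = sqrt 2 * int_{c1}^{c2} dv / sqrt (c - phi v), c1 < c2 the roots of phi v = c.
  The integrand is absolutely integrable (inverse square-root singularities).\<close>
definition T2 :: "real \<Rightarrow> real \<Rightarrow> real \<Rightarrow> real" where
  "T2 c c1 c2 = sqrt 2 * integral {c1..c2} (\<lambda>v. 1 / sqrt (c - phi v))"

end

theory Submission
  imports Defs
begin

text \<open>
  Let \<open>q v = c - phi v\<close>, which vanishes at \<open>c1 < 1 < c2\<close>. As \<open>phi\<close> is convex, \<open>q\<close> lies
  below its tangents at the roots, \<open>q v \<le> (1/c1 - c1) (v - c1)\<close> and \<open>q v \<le> (c2 - 1/c2) (c2 - v)\<close>;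
  integrating the resulting lower bounds \<open>1 / sqrt (K |v - r|)\<close> for \<open>1 / sqrt q\<close> over \<open>[c1, 1]\<close>
  and \<open>[1, c2]\<close> gives exactly the two summands. As \<open>phi'' \<ge> 1\<close>, also
  \<open>q v \<ge> (v - c1) (c2 - v) / 2\<close>, so \<open>1 / sqrt q\<close> has integrable inverse square root
  singularities at the roots.
\<close>

lemma has_integral_inverse_sqrt_linear:
  fixes a b k :: real
  assumes "0 < k" "a \<le> b"
  shows "((\<lambda>v. 1 / sqrt (k * (v - a))) has_integral 2 * sqrt (b - a) / sqrt k) {a..b}"
proof -
  let ?F = "\<lambda>v. 2 * sqrt (v - a) / sqrt k"
  have "((\<lambda>v. 1 / sqrt (k * (v - a))) has_integral ?F b - ?F a) {a..b}"
  proof (rule fundamental_theorem_of_calculus_interior)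
    show "continuous_on {a..b} ?F"
      using assms by (intro continuous_intros) auto
    fix x assume x: "x \<in> {a<..<b}"
    have "(?F has_real_derivative 1 / (sqrt k * sqrt (x - a))) (at x)"
      using x assms by (auto intro!: derivative_eq_intros simp: field_simps)
    then show "(?F has_vector_derivative 1 / sqrt (k * (x - a))) (at x)"
      by (simp add: real_sqrt_mult has_real_derivative_iff_has_vector_derivative)
  qed (use assms in auto)
  then show ?thesis by simp
qed

lemma inverse_sqrt_integral_ge_left:
  fixes q :: "real \<Rightarrow> real"
  assumes "a < b" "0 < k" "continuous_on {a<..<b} q"
    and bounds: "\<And>v. v \<in> {a<..<b} \<Longrightarrow> k * (v - a) \<le> q v \<and> q v \<le> K * (v - a)"
  shows "(\<lambda>v. 1 / sqrt (q v)) integrable_on {a..b}"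
    and "2 * sqrt (b - a) / sqrt K \<le> integral {a..b} (\<lambda>v. 1 / sqrt (q v))"
proof -
  have mid: "(a + b) / 2 \<in> {a<..<b}"
    using assms by auto
  have "k * ((a + b) / 2 - a) \<le> K * ((a + b) / 2 - a)"
    using bounds[OF mid] by linarith
  moreover have "0 < k * ((a + b) / 2 - a)"
    using assms by simp
  ultimately have K: "0 < K"
    using assms by (smt (verit) zero_less_mult_iff)
  have q_pos: "0 < q v" if "v \<in> {a<..<b}" for v
  proof -
    have "0 < k * (v - a)"
      using that \<open>0 < k\<close> by simp
    then show ?thesis
      using bounds[OF that] by linarith
  qed
  have inverse_sqrt_continuous: "continuous_on {a<..<b} (\<lambda>v. 1 / sqrt (q v))"
  proof (intro continuous_on_divide continuous_on_const continuous_on_real_sqrt assms(3) ballI)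
    fix v assume "v \<in> {a<..<b}"
    then show "sqrt (q v) \<noteq> 0"
      using q_pos by fastforce
  qed
  have inverse_sqrt_integrable: "(\<lambda>v. 1 / sqrt (k' * (v - a))) integrable_on {a<..<b}"
    if "0 < k'" for k'
    using has_integral_integrable[OF has_integral_inverse_sqrt_linear[OF that less_imp_le[OF \<open>a < b\<close>]]]
    by (simp add: integrable_on_open_interval_real)
  have "(\<lambda>v. 1 / sqrt (q v)) integrable_on {a<..<b}"
  proof (rule measurable_bounded_by_integrable_imp_integrable_real)
    show "(\<lambda>v. 1 / sqrt (q v)) \<in> borel_measurable (lebesgue_on {a<..<b})"
      using inverse_sqrt_continuous by (rule continuous_imp_measurable_on_sets_lebesgue) auto
    show "(\<lambda>v. 1 / sqrt (k * (v - a))) integrable_on {a<..<b}"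
      using inverse_sqrt_integrable[OF \<open>0 < k\<close>] .
    show "\<bar>1 / sqrt (q v)\<bar> \<le> 1 / sqrt (k * (v - a))" if "v \<in> {a<..<b}" for v
      using bounds[OF that] q_pos[OF that] that \<open>0 < k\<close> by (simp add: frac_le)
  qed auto
  then show int: "(\<lambda>v. 1 / sqrt (q v)) integrable_on {a..b}"
    by (simp add: integrable_on_open_interval_real)
  have "integral {a..b} (\<lambda>v. 1 / sqrt (K * (v - a))) \<le> integral {a..b} (\<lambda>v. 1 / sqrt (q v))"
    unfolding integral_open_interval_real
  proof (rule integral_le)
    show "(\<lambda>v. 1 / sqrt (K * (v - a))) integrable_on {a<..<b}"
      using inverse_sqrt_integrable[OF K] .
    show "1 / sqrt (K * (v - a)) \<le> 1 / sqrt (q v)" if "v \<in> {a<..<b}" for v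
      using bounds[OF that] q_pos[OF that] by (simp add: frac_le)
  qed (use int in \<open>simp add: integrable_on_open_interval_real\<close>)
  then show "2 * sqrt (b - a) / sqrt K \<le> integral {a..b} (\<lambda>v. 1 / sqrt (q v))"
    using has_integral_inverse_sqrt_linear[OF K, of a b] assms by (simp add: integral_unique)
qed

lemma inverse_sqrt_integral_ge_right:
  fixes q :: "real \<Rightarrow> real"
  assumes "a < b" "0 < k" "continuous_on {a<..<b} q"
    and bounds: "\<And>v. v \<in> {a<..<b} \<Longrightarrow> k * (b - v) \<le> q v \<and> q v \<le> K * (b - v)"
  shows "(\<lambda>v. 1 / sqrt (q v)) integrable_on {a..b}"
    and "2 * sqrt (b - a) / sqrt K \<le> integral {a..b} (\<lambda>v. 1 / sqrt (q v))"
proof -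
  have "- b < - a"
    using assms by simp
  moreover have "continuous_on {-b<..<-a} (\<lambda>w. q (- w))"
    by (rule continuous_on_compose2[OF assms(3) continuous_on_minus[OF continuous_on_id]]) auto
  moreover have "k * (w - - b) \<le> q (- w) \<and> q (- w) \<le> K * (w - - b)" if "w \<in> {-b<..<-a}" for w
    using bounds[of "- w"] that by (auto simp: add.commute)
  ultimately have reflected:
    "(\<lambda>w. 1 / sqrt (q (- w))) integrable_on {-b..-a}"
    "2 * sqrt (- a - - b) / sqrt K \<le> integral {-b..-a} (\<lambda>w. 1 / sqrt (q (- w)))"
    using inverse_sqrt_integral_ge_left[OF _ \<open>0 < k\<close>, of "- b" "- a" "\<lambda>w. q (- w)" K] by blast+
  show "(\<lambda>v. 1 / sqrt (q v)) integrable_on {a..b}"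
    using reflected(1) Henstock_Kurzweil_Integration.integrable_reflect_real[where f = "\<lambda>v. 1 / sqrt (q v)"]
    by simp
  show "2 * sqrt (b - a) / sqrt K \<le> integral {a..b} (\<lambda>v. 1 / sqrt (q v))"
    using reflected(2) Henstock_Kurzweil_Integration.integral_reflect_real[where f = "\<lambda>v. 1 / sqrt (q v)"]
    by simp
qed

lemma continuous_on_phi: "continuous_on {0<..} phi"
  unfolding phi_def by (intro continuous_intros) auto

lemma phi_tangent_le:
  assumes "0 < u" "0 < v"
  shows "phi u + (u - 1 / u) * (v - u) \<le> phi v"
proof -
  have "ln v - ln u \<le> v / u - 1"
    using ln_le_minus_one[of "v / u"] assms by (simp add: ln_div)
  moreover have "phi v - phi u - (u - 1 / u) * (v - u) = (v - u)\<^sup>2 / 2 + (v / u - 1) - (ln v - ln u)"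
    using assms by (simp add: phi_def field_simps power2_eq_square)
  moreover have "0 \<le> (v - u)\<^sup>2 / 2"
    by simp
  ultimately show ?thesis
    by linarith
qed

lemma phi_below_chord:
  assumes "0 < a" "a \<le> v" "v \<le> b"
  shows "(b - a) * phi v + (v - a) * (b - v) * (b - a) / 2 \<le> (b - v) * phi a + (v - a) * phi b"
proof (cases "a = b")
  case False
  define t where "t = (b - v) / (b - a)"
  have t: "0 \<le> t" "t \<le> 1"
    using assms False by (auto simp: t_def field_simps)
  have tb: "t * (b - a) = b - v"
    using False by (simp add: t_def)
  then have v: "v = t * a + (1 - t) * b"
    by (simp add: algebra_simps)
  have "t * ln a + (1 - t) * ln b \<le> ln (t * a + (1 - t) * b)"
    using concave_onD[OF ln_concave, of "1 - t" a b] t assms by simp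
  then have "t * ln a + (1 - t) * ln b \<le> ln v"
    by (simp only: v)
  then have "(b - a) * (t * ln a + (1 - t) * ln b) \<le> (b - a) * ln v"
    using assms by (intro mult_left_mono) auto
  moreover have "(b - a) * (t * ln a + (1 - t) * ln b) = (t * (b - a)) * ln a + ((1 - t) * (b - a)) * ln b"
    by (simp add: algebra_simps)
  moreover have "(1 - t) * (b - a) = v - a"
    using tb by (simp add: algebra_simps)
  ultimately have "(b - v) * ln a + (v - a) * ln b \<le> (b - a) * ln v"
    by (simp only: tb)
  moreover have "(b - v) * phi a + (v - a) * phi b - ((b - a) * phi v + (v - a) * (b - v) * (b - a) / 2)
      = (b - a) * ln v - ((b - v) * ln a + (v - a) * ln b)"
    unfolding phi_def by (simp add: power2_eq_square algebra_simps diff_divide_distrib add_divide_distrib)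
  ultimately show ?thesis
    by linarith
qed (use assms in simp)

lemma phi_level_gap:
  assumes "0 < a" "a \<le> v" "v \<le> b" "phi a = c" "phi b = c"
  shows "(v - a) * (b - v) / 2 \<le> c - phi v"
proof (cases "a = b")
  case False
  then have "(b - a) * ((v - a) * (b - v) / 2) \<le> (b - a) * (c - phi v)"
    using phi_below_chord[OF assms(1-3)] assms by (simp add: algebra_simps)
  then show ?thesis
    using False assms by (simp add: mult_le_cancel_left)
qed (use assms in simp)

lemma one_minus_divide_inverse_minus:
  fixes u :: real
  assumes "0 < u" "u \<noteq> 1"
  shows "(1 - u) / (1 / u - u) = u / (1 + u)"
proof -
  have factor: "1 / u - u = (1 - u) * (1 + u) / u"
    using assms by (simp add: field_simps)
  have "(1 - u) * (1 + u) = u * (1 / u - u)"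
    using assms by (simp add: algebra_simps)
  moreover have "1 / u - u \<noteq> 0"
    unfolding factor using assms by simp
  ultimately show ?thesis
    using assms by (simp add: frac_eq_eq)
qed

lemma integral_phi_level_left_ge:
  assumes "0 < c1" "c1 < 1" "1 < c2" "phi c1 = c" "phi c2 = c"
  shows "(\<lambda>v. 1 / sqrt (c - phi v)) integrable_on {c1..1}"
    and "2 * sqrt (c1 / (1 + c1)) \<le> integral {c1..1} (\<lambda>v. 1 / sqrt (c - phi v))"
proof -
  have "continuous_on {c1<..<1} (\<lambda>v. c - phi v)"
    using assms by (intro continuous_intros continuous_on_subset[OF continuous_on_phi]) auto
  moreover have "(c2 - 1) / 2 * (v - c1) \<le> c - phi v \<and> c - phi v \<le> (1 / c1 - c1) * (v - c1)"
    if v: "v \<in> {c1<..<1}" for v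
  proof
    have "(c2 - 1) / 2 * (v - c1) \<le> (v - c1) * (c2 - v) / 2"
      using v by (simp add: mult_left_mono)
    also have "\<dots> \<le> c - phi v"
      using v assms by (intro phi_level_gap) auto
    finally show "(c2 - 1) / 2 * (v - c1) \<le> c - phi v" .
    show "c - phi v \<le> (1 / c1 - c1) * (v - c1)"
      using phi_tangent_le[of c1 v] v assms by (simp add: algebra_simps)
  qed
  moreover have "0 < (c2 - 1) / 2"
    using assms by simp
  ultimately have ge: "(\<lambda>v. 1 / sqrt (c - phi v)) integrable_on {c1..1}"
    "2 * sqrt (1 - c1) / sqrt (1 / c1 - c1) \<le> integral {c1..1} (\<lambda>v. 1 / sqrt (c - phi v))"
    using inverse_sqrt_integral_ge_left[OF \<open>c1 < 1\<close>, of "(c2 - 1) / 2" "\<lambda>v. c - phi v"] by blast+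
  then show "(\<lambda>v. 1 / sqrt (c - phi v)) integrable_on {c1..1}"
    by blast
  have "sqrt (1 - c1) / sqrt (1 / c1 - c1) = sqrt (c1 / (1 + c1))"
    using one_minus_divide_inverse_minus[of c1] assms by (simp flip: real_sqrt_divide)
  then show "2 * sqrt (c1 / (1 + c1)) \<le> integral {c1..1} (\<lambda>v. 1 / sqrt (c - phi v))"
    using ge(2) by simp
qed

lemma integral_phi_level_right_ge:
  assumes "0 < c1" "c1 < 1" "1 < c2" "phi c1 = c" "phi c2 = c"
  shows "(\<lambda>v. 1 / sqrt (c - phi v)) integrable_on {1..c2}"
    and "2 * sqrt (c2 / (1 + c2)) \<le> integral {1..c2} (\<lambda>v. 1 / sqrt (c - phi v))"
proof -
  have "continuous_on {1<..<c2} (\<lambda>v. c - phi v)"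
    using assms by (intro continuous_intros continuous_on_subset[OF continuous_on_phi]) auto
  moreover have "(1 - c1) / 2 * (c2 - v) \<le> c - phi v \<and> c - phi v \<le> (c2 - 1 / c2) * (c2 - v)"
    if v: "v \<in> {1<..<c2}" for v
  proof
    have "(1 - c1) / 2 * (c2 - v) \<le> (v - c1) * (c2 - v) / 2"
      using v by (simp add: mult_right_mono)
    also have "\<dots> \<le> c - phi v"
      using v assms by (intro phi_level_gap) auto
    finally show "(1 - c1) / 2 * (c2 - v) \<le> c - phi v" .
    have "c - phi v \<le> - ((c2 - 1 / c2) * (v - c2))"
      using phi_tangent_le[of c2 v] v assms by simp
    then show "c - phi v \<le> (c2 - 1 / c2) * (c2 - v)"
      by (metis minus_diff_eq mult_minus_right)
  qed
  moreover have "0 < (1 - c1) / 2"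
    using assms by simp
  ultimately have ge: "(\<lambda>v. 1 / sqrt (c - phi v)) integrable_on {1..c2}"
    "2 * sqrt (c2 - 1) / sqrt (c2 - 1 / c2) \<le> integral {1..c2} (\<lambda>v. 1 / sqrt (c - phi v))"
    using inverse_sqrt_integral_ge_right[OF \<open>1 < c2\<close>, of "(1 - c1) / 2" "\<lambda>v. c - phi v"] by blast+
  then show "(\<lambda>v. 1 / sqrt (c - phi v)) integrable_on {1..c2}"
    by blast
  have "(c2 - 1) / (c2 - 1 / c2) = (1 - c2) / (1 / c2 - c2)"
    by (metis minus_diff_eq minus_divide_divide)
  also have "\<dots> = c2 / (1 + c2)"
    using one_minus_divide_inverse_minus[of c2] assms by simp
  finally have "sqrt (c2 - 1) / sqrt (c2 - 1 / c2) = sqrt (c2 / (1 + c2))"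
    by (simp flip: real_sqrt_divide)
  then show "2 * sqrt (c2 / (1 + c2)) \<le> integral {1..c2} (\<lambda>v. 1 / sqrt (c - phi v))"
    using ge(2) by simp
qed

theorem lemmaA4:
  fixes c c1 c2 :: real
  assumes "c > 1/2"
    and "0 < c1" and "c1 < 1" and "1 < c2"
    and "phi c1 = c" and "phi c2 = c"
  shows "T2 c c1 c2 \<ge> 2 * sqrt 2 * (sqrt (c1 / (1 + c1)) + sqrt (c2 / (1 + c2)))"
proof -
  let ?f = "\<lambda>v. 1 / sqrt (c - phi v)"
  note left = integral_phi_level_left_ge[OF assms(2-6)]
  note right = integral_phi_level_right_ge[OF assms(2-6)]
  have "integral {c1..c2} ?f = integral {c1..1} ?f + integral {1..c2} ?f"
    using Henstock_Kurzweil_Integration.integrable_combine[OF _ _ left(1) right(1)] assms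
    by (intro Henstock_Kurzweil_Integration.integral_combine[symmetric]) auto
  then have "2 * (sqrt (c1 / (1 + c1)) + sqrt (c2 / (1 + c2))) \<le> integral {c1..c2} ?f"
    using left(2) right(2) unfolding distrib_left by linarith
  then have "sqrt 2 * (2 * (sqrt (c1 / (1 + c1)) + sqrt (c2 / (1 + c2)))) \<le> sqrt 2 * integral {c1..c2} ?f"
    by (rule mult_left_mono) simp
  then show ?thesis
    by (simp add: T2_def mult.assoc)
qed

end
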